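(* There exists a strongly hypoenergetic tree of order $n$ with maximum degree $4$ for every $n$ satisfying one of the following: $n\equiv 0 \pmod 4$ and $n\geq 20$; or $n\equiv 2\pmod 4$ and $n\geq 26$; or $n\equiv 3\pmod 4$ and $n\geq 23$.
   Context: All graphs are finite and simple. The energy of a graph $G$ is $E(G)=\sum_{i=1}^n |\lambda_i|$, where $\lambda_1,\dots,\lambda_n$ are the eigenvalues of the adjacency matrix of $G$. A connected graph $G$ with $n$ vertices is called strongly hypoenergetic if $E(G)<n-1$. *)

theory Defs
  imports "Jordan_Normal_Form.Char_Poly" "HOL-Computational_Algebra.Fundamental_Theorem_Algebra"
begin

definition simple_graph :: "nat \<Rightarrow> (nat \<Rightarrow> nat \<Rightarrow> bool) \<Rightarrow> bool" where
  "simple_graph n E \<longleftrightarrow> (\<forall>i j. E i j \<longrightarrow> i < n \<and> j < n \<and> i \<noteq> j \<and> E j i)"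

definition graph_connected :: "nat \<Rightarrow> (nat \<Rightarrow> nat \<Rightarrow> bool) \<Rightarrow> bool" where
  "graph_connected n E \<longleftrightarrow> (\<forall>u<n. \<forall>v<n. E\<^sup>*\<^sup>* u v)"

definition is_cycle :: "nat \<Rightarrow> (nat \<Rightarrow> nat \<Rightarrow> bool) \<Rightarrow> nat list \<Rightarrow> bool" where
  "is_cycle n E vs \<longleftrightarrow> length vs \<ge> 3 \<and> distinct vs \<and> set vs \<subseteq> {..<n}
     \<and> (\<forall>i. Suc i < length vs \<longrightarrow> E (vs ! i) (vs ! Suc i)) \<and> E (last vs) (hd vs)"

definition is_tree :: "nat \<Rightarrow> (nat \<Rightarrow> nat \<Rightarrow> bool) \<Rightarrow> bool" where
  "is_tree n E \<longleftrightarrow> simple_graph n E \<and> graph_connected n E \<and> (\<nexists>vs. is_cycle n E vs)"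

definition degree_of :: "nat \<Rightarrow> (nat \<Rightarrow> nat \<Rightarrow> bool) \<Rightarrow> nat \<Rightarrow> nat" where
  "degree_of n E v = card {u. u < n \<and> E v u}"

definition max_degree :: "nat \<Rightarrow> (nat \<Rightarrow> nat \<Rightarrow> bool) \<Rightarrow> nat" where
  "max_degree n E = Max (degree_of n E ` {..<n})"

text \<open>Adjacency matrix (over the complex numbers, where its characteristic polynomial splits).\<close>
definition adj_matrix :: "nat \<Rightarrow> (nat \<Rightarrow> nat \<Rightarrow> bool) \<Rightarrow> complex mat" where
  "adj_matrix n E = mat n n (\<lambda>(i, j). if E i j then 1 else 0)"

definition energy :: "nat \<Rightarrow> (nat \<Rightarrow> nat \<Rightarrow> bool) \<Rightarrow> real" where
  "energy n E = sum_mset (image_mset cmod (proots (char_poly (adj_matrix n E))))"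

definition strongly_hypoenergetic :: "nat \<Rightarrow> (nat \<Rightarrow> nat \<Rightarrow> bool) \<Rightarrow> bool" where
  "strongly_hypoenergetic n E \<longleftrightarrow> simple_graph n E \<and> graph_connected n E \<and> energy n E < real n - 1"

end

theory Submission
  imports Defs "Jordan_Normal_Form.Schur_Decomposition"
begin

lemma mat_adjoint_dim [simp]:
  "dim_row (mat_adjoint A) = dim_col A" "dim_col (mat_adjoint A) = dim_row A"
  by (simp_all add: mat_adjoint_def)

lemma mat_adjoint_carrier [simp]: "A \<in> carrier_mat m n \<Longrightarrow> mat_adjoint A \<in> carrier_mat n m"
  by (rule carrier_matI) simp_all

lemma mat_adjoint_index [simp]:
  "i < dim_col A \<Longrightarrow> j < dim_row A \<Longrightarrow> mat_adjoint A $$ (i, j) = conjugate (A $$ (j, i))"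
  by (simp add: mat_adjoint_def mat_of_rows_index)

lemma conjugate_one [simp]: "conjugate (1 :: 'a :: conjugatable_field) = 1"
proof -
  have "conjugate 1 * conjugate 1 = (conjugate 1 :: 'a)"
    by (metis conjugate_dist_mul mult_1_left)
  then show ?thesis
    by (metis conjugate_zero_iff mult_cancel_left mult.right_neutral one_neq_zero)
qed

lemma mat_adjoint_one [simp]: "mat_adjoint (1\<^sub>m n :: 'a :: conjugatable_field mat) = 1\<^sub>m n"
  by (intro eq_matI) auto

lemma mat_adjoint_mult:
  fixes A :: "'a :: conjugatable_field mat"
  assumes "A \<in> carrier_mat m n" "B \<in> carrier_mat n k"
  shows "mat_adjoint (A * B) = mat_adjoint B * mat_adjoint A"
  using assms
  by (intro eq_matI) (auto simp: scalar_prod_def sum_conjugate conjugate_dist_mul mult.commute)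

lemma mat_adjoint_four_block_diag:
  assumes "A \<in> carrier_mat a a" "B \<in> carrier_mat b b"
  shows "mat_adjoint (four_block_mat A (0\<^sub>m a b) (0\<^sub>m b a) B)
    = four_block_mat (mat_adjoint A) (0\<^sub>m a b) (0\<^sub>m b a) (mat_adjoint B)"
  using assms by (intro eq_matI) auto

definition unitary_mat :: "nat \<Rightarrow> 'a :: conjugatable_field mat \<Rightarrow> bool" where
  "unitary_mat n U \<longleftrightarrow> U \<in> carrier_mat n n \<and> mat_adjoint U * U = 1\<^sub>m n"

lemma unitary_mat_right_inverse:
  "unitary_mat n U \<Longrightarrow> U * mat_adjoint U = 1\<^sub>m n"
  unfolding unitary_mat_def by (auto intro: mat_mult_left_right_inverse)

lemma unitary_mat_mult:
  assumes U: "unitary_mat n U" and V: "unitary_mat n V"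
  shows "unitary_mat n (U * V)"
proof -
  have carr: "U \<in> carrier_mat n n" "V \<in> carrier_mat n n"
    using U V by (auto simp: unitary_mat_def)
  have "mat_adjoint (U * V) * (U * V) = mat_adjoint V * (mat_adjoint U * U) * V"
    using carr by (simp add: mat_adjoint_mult assoc_mult_mat[of _ n n _ n _ n] mult_carrier_mat[of _ n n _ n])
  also have "\<dots> = 1\<^sub>m n"
    using U V carr by (simp add: unitary_mat_def)
  finally show ?thesis using carr by (simp add: unitary_mat_def)
qed

lemma unitary_mat_four_block_diag:
  assumes A: "unitary_mat a A" and B: "unitary_mat b B"
  shows "unitary_mat (a + b) (four_block_mat A (0\<^sub>m a b) (0\<^sub>m b a) B)"
proof -
  have carr: "A \<in> carrier_mat a a" "B \<in> carrier_mat b b"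
    using A B by (auto simp: unitary_mat_def)
  have "mat_adjoint (four_block_mat A (0\<^sub>m a b) (0\<^sub>m b a) B) * four_block_mat A (0\<^sub>m a b) (0\<^sub>m b a) B
      = four_block_mat (1\<^sub>m a) (0\<^sub>m a b) (0\<^sub>m b a) (1\<^sub>m b)"
    using A B carr by (simp add: unitary_mat_def mat_adjoint_four_block_diag
        mult_four_block_mat[of _ a a _ b _ b _ _ a _ b])
  also have "\<dots> = 1\<^sub>m (a + b)" by simp
  finally show ?thesis using carr by (simp add: unitary_mat_def)
qed

definition vec_normalize :: "complex vec \<Rightarrow> complex vec" where
  "vec_normalize w = complex_of_real (1 / sqrt (Re (w \<bullet>c w))) \<cdot>\<^sub>v w"

lemma cscalar_prod_smult:
  fixes v w :: "'a :: conjugatable_field vec"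
  assumes "v \<in> carrier_vec n" "w \<in> carrier_vec n"
  shows "(a \<cdot>\<^sub>v v) \<bullet>c (b \<cdot>\<^sub>v w) = a * conjugate b * (v \<bullet>c w)"
  using assms by (simp add: scalar_prod_def sum_distrib_left conjugate_dist_mul mult_ac)

lemma cscalar_prod_vec_normalize:
  assumes "v \<in> carrier_vec n" "w \<in> carrier_vec n"
  shows "vec_normalize v \<bullet>c vec_normalize w
    = complex_of_real (1 / (sqrt (Re (v \<bullet>c v)) * sqrt (Re (w \<bullet>c w)))) * (v \<bullet>c w)"
  unfolding vec_normalize_def cscalar_prod_smult[OF assms] by simp

lemma cscalar_prod_self_real: "(w :: complex vec) \<bullet>c w = complex_of_real (Re (w \<bullet>c w))"
  using conjugate_square_ge_0_vec[of w] by (simp add: less_eq_complex_def complex_eq_iff)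

lemma orthonormal_map_vec_normalize:
  assumes orth: "corthogonal ws" and carr: "set ws \<subseteq> carrier_vec n"
    and i: "i < length ws" and j: "j < length ws"
  shows "map vec_normalize ws ! i \<bullet>c map vec_normalize ws ! j = (if i = j then 1 else 0)"
proof -
  have ws: "ws ! i \<in> carrier_vec n" "ws ! j \<in> carrier_vec n"
    using carr i j by auto
  have "0 < Re (ws ! i \<bullet>c ws ! i)"
    using corthogonalD[OF orth i i] conjugate_square_ge_0_vec[of "ws ! i"]
    by (auto simp: less_eq_complex_def complex_eq_iff)
  then show ?thesis
    using corthogonalD[OF orth i j] i j cscalar_prod_self_real[of "ws ! i"]
    by (auto simp: cscalar_prod_vec_normalize[OF ws] field_simps simp del: of_real_mult)
qed

lemma unitary_mat_with_first_column:
  fixes v :: "complex vec"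
  assumes v: "v \<in> carrier_vec n" and v0: "v \<noteq> 0\<^sub>v n"
  obtains W where "unitary_mat n W" "col W 0 = vec_normalize v"
proof -
  interpret cof_vec_space n "TYPE(complex)" .
  define b where "b = basis_completion v"
  from basis_completion[OF v v0, folded b_def]
  have b: "span (set b) = carrier_vec n" "distinct b" "\<not> lin_dep (set b)"
    "set b \<subseteq> carrier_vec n" "hd b = v" "length b = n" by auto
  have n: "0 < n" using v v0 by (cases n) auto
  obtain vs where bv: "b = v # vs" using b(5,6) n by (cases b) auto
  define ws where "ws = map vec_normalize (gram_schmidt n b)"
  have gs: "set (gram_schmidt n b) \<subseteq> carrier_vec n" "corthogonal (gram_schmidt n b)"
    "length (gram_schmidt n b) = n" "hd (gram_schmidt n b) = v"
    using gram_schmidt_result[OF b(4,2,3) refl] gram_schmidt_hd[OF v, of vs] b(6) bv by auto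
  have ws: "set ws \<subseteq> carrier_vec n" "length ws = n"
    using gs by (auto simp: ws_def vec_normalize_def)
  define W where "W = mat_of_cols n ws"
  have W: "W \<in> carrier_mat n n" using mat_of_cols_carrier(1)[of n ws] ws by (simp add: W_def)
  have W_index: "W $$ (k, i) = ws ! i $ k" if "k < n" "i < n" for k i
    using that ws by (simp add: W_def mat_of_cols_index)
  have unitary: "mat_adjoint W * W = 1\<^sub>m n"
  proof (rule eq_matI)
    fix i j assume "i < dim_row (1\<^sub>m n)" "j < dim_col (1\<^sub>m n)"
    then have ij: "i < n" "j < n" by auto
    have "(mat_adjoint W * W) $$ (i, j) = (\<Sum>k<n. cnj (W $$ (k, i)) * W $$ (k, j))"
      using W ij by (simp add: scalar_prod_def lessThan_atLeast0)
    also have "\<dots> = ws ! j \<bullet>c ws ! i"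
    proof -
      have "dim_vec (ws ! i) = n" using ws ij by (metis carrier_vecD nth_mem subsetD)
      then show ?thesis using ij by (auto simp: W_index scalar_prod_def lessThan_atLeast0 mult.commute)
    qed
    finally have "(mat_adjoint W * W) $$ (i, j) = ws ! j \<bullet>c ws ! i" .
    then show "(mat_adjoint W * W) $$ (i, j) = 1\<^sub>m n $$ (i, j)"
      using orthonormal_map_vec_normalize[OF gs(2,1), of j i] ij gs(3) by (simp add: ws_def)
  qed (use W in auto)
  have "gram_schmidt n b ! 0 = v"
    using gs(3,4) n by (metis hd_conv_nth length_greater_0_conv)
  then have "ws ! 0 = vec_normalize v"
    using gs(3) n by (simp add: ws_def)
  moreover have "col W 0 = ws ! 0"
    unfolding W_def by (rule col_mat_of_cols) (use ws n in auto)
  ultimately show ?thesis using that W unitary unfolding unitary_mat_def by simp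
qed

lemma unitary_deflation:
  fixes A :: "complex mat"
  assumes A: "A \<in> carrier_mat (Suc m) (Suc m)"
    and v: "v \<in> carrier_vec (Suc m)" "v \<noteq> 0\<^sub>v (Suc m)" and ev: "A *\<^sub>v v = e \<cdot>\<^sub>v v"
  obtains W A2 A3 where "unitary_mat (Suc m) W" "A2 \<in> carrier_mat 1 m" "A3 \<in> carrier_mat m m"
    "mat_adjoint W * A * W = four_block_mat (mat 1 1 (\<lambda>_. e)) A2 (0\<^sub>m m 1) A3"
proof -
  obtain W where W: "unitary_mat (Suc m) W" and W0: "col W 0 = vec_normalize v"
    using unitary_mat_with_first_column[OF v] .
  have Wc: "W \<in> carrier_mat (Suc m) (Suc m)" using W by (simp add: unitary_mat_def)
  define B where "B = mat_adjoint W * A * W"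
  have B: "B \<in> carrier_mat (Suc m) (Suc m)" using A Wc by (auto simp: B_def intro!: mult_carrier_mat)
  have W0c: "col W 0 \<in> carrier_vec (Suc m)" using Wc by (metis carrier_matD(1) col_dim)
  have "A *\<^sub>v col W 0 = e \<cdot>\<^sub>v col W 0"
    using A v ev by (simp add: W0 vec_normalize_def mult_mat_vec smult_smult_assoc mult.commute)
  then have "col B 0 = mat_adjoint W *\<^sub>v (e \<cdot>\<^sub>v col W 0)"
  proof -
    have Wa: "mat_adjoint W \<in> carrier_mat (Suc m) (Suc m)" using Wc by simp
    show ?thesis
      unfolding B_def using A Wc \<open>A *\<^sub>v col W 0 = e \<cdot>\<^sub>v col W 0\<close>
      by (subst col_mult2[of _ "Suc m" "Suc m"])
        (auto intro!: mult_carrier_mat simp: assoc_mult_mat_vec[OF Wa A W0c])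
  qed
  also have "\<dots> = e \<cdot>\<^sub>v col (mat_adjoint W * W) 0"
    using Wc W0c by (simp add: mult_mat_vec[of _ "Suc m" "Suc m"] col_mult2[of _ "Suc m" "Suc m"])
  finally have "col B 0 = e \<cdot>\<^sub>v unit_vec (Suc m) 0"
    using W by (simp add: unitary_mat_def)
  then have col0: "B $$ (i, 0) = (if i = 0 then e else 0)" if "i < Suc m" for i
    using B that by (auto dest: arg_cong[where f = "\<lambda>w. w $ i"])
  obtain A1 A2 A0 A3 where split: "split_block B 1 1 = (A1, A2, A0, A3)"
    by (cases "split_block B 1 1") auto
  have blocks: "A2 \<in> carrier_mat 1 m" "A3 \<in> carrier_mat m m" "B = four_block_mat A1 A2 A0 A3"
    using split_block[OF split, of m m] B by auto
  moreover have "A1 = mat 1 1 (\<lambda>_. e)" "A0 = 0\<^sub>m m 1"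
    using split col0 B by (auto simp: split_block_def Let_def intro!: eq_matI)
  ultimately show ?thesis using that W by (simp add: B_def)
qed

lemma four_block_diag_mult:
  assumes A1: "A1 \<in> carrier_mat a a" and A2: "A2 \<in> carrier_mat a b" and A3: "A3 \<in> carrier_mat b b"
    and U: "U \<in> carrier_mat b b"
  defines "D \<equiv> four_block_mat (1\<^sub>m a) (0\<^sub>m a b) (0\<^sub>m b a) U"
  shows "mat_adjoint D * four_block_mat A1 A2 (0\<^sub>m b a) A3 * D
    = four_block_mat A1 (A2 * U) (0\<^sub>m b a) (mat_adjoint U * A3 * U)"
proof -
  have UA3: "mat_adjoint U * A3 \<in> carrier_mat b b" using U A3 by (auto intro!: mult_carrier_mat)
  then have "mat_adjoint D * four_block_mat A1 A2 (0\<^sub>m b a) A3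
      = four_block_mat A1 A2 (0\<^sub>m b a) (mat_adjoint U * A3)"
    using assms by (simp add: D_def mat_adjoint_four_block_diag mult_four_block_mat[of _ a a _ b _ b _ _ a _ b])
  then show ?thesis
    using assms UA3 by (simp add: D_def mult_four_block_mat[of _ a a _ b _ b _ _ a _ b])
qed

lemma char_poly_unitary_conj:
  assumes W: "unitary_mat n W" and A: "A \<in> carrier_mat n n"
  shows "char_poly (mat_adjoint W * A * W) = char_poly A"
proof (rule char_poly_similar)
  have "W \<in> carrier_mat n n" using W by (simp add: unitary_mat_def)
  then show "similar_mat (mat_adjoint W * A * W) A"
    unfolding similar_mat_def using A W unitary_mat_right_inverse[OF W]
    by (intro exI[of _ "mat_adjoint W"] exI[of _ W] similar_mat_witI[of _ _ n])
      (auto simp: unitary_mat_def intro!: mult_carrier_mat)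
qed

lemma unitary_schur_diagonal:
  fixes A :: "complex mat"
  assumes "A \<in> carrier_mat n n" "char_poly A = (\<Prod>e\<leftarrow>es. [:- e, 1:])"
  shows "\<exists>U. unitary_mat n U \<and> (\<forall>k<n. (mat_adjoint U * A * U) $$ (k, k) = es ! k)"
  using assms
proof (induction es arbitrary: n A)
  case Nil
  then have "n = 0" using degree_monic_char_poly[of A n] by simp
  then show ?case by (intro exI[of _ "1\<^sub>m 0"]) (simp add: unitary_mat_def)
next
  case (Cons e es)
  have "n = Suc (length es)"
    using degree_monic_char_poly[OF Cons.prems(1)] degree_linear_factors[of uminus "e # es"]
    by (simp add: Cons.prems(2))
  then obtain m where n: "n = Suc m" and A: "A \<in> carrier_mat (Suc m) (Suc m)"
    using Cons.prems(1) by blast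
  have "eigenvalue A e"
    using A by (simp add: eigenvalue_root_char_poly Cons.prems(2))
  then obtain v where v: "v \<in> carrier_vec (Suc m)" "v \<noteq> 0\<^sub>v (Suc m)" "A *\<^sub>v v = e \<cdot>\<^sub>v v"
    using A by (auto simp: eigenvalue_def eigenvector_def)
  obtain W A2 A3 where W: "unitary_mat (Suc m) W" and A2: "A2 \<in> carrier_mat 1 m"
    and A3: "A3 \<in> carrier_mat m m"
    and WAW: "mat_adjoint W * A * W = four_block_mat (mat 1 1 (\<lambda>_. e)) A2 (0\<^sub>m m 1) A3"
    using unitary_deflation[OF A v] .
  have "char_poly (mat 1 1 (\<lambda>_. e)) = [:- e, 1:]"
    by (simp add: char_poly_defs det_def sign_def)
  then have "[:- e, 1:] * char_poly A3 = [:- e, 1:] * (\<Prod>e\<leftarrow>es. [:- e, 1:])"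
    using char_poly_unitary_conj[OF W A] char_poly_four_block_zeros_col[OF _ A2 A3, of "mat 1 1 (\<lambda>_. e)"]
    by (simp add: WAW Cons.prems(2))
  then have "char_poly A3 = (\<Prod>e\<leftarrow>es. [:- e, 1:])"
    by (metis mult_cancel_left pCons_eq_0_iff one_neq_zero)
  then obtain U3 where U3: "unitary_mat m U3"
    and diag3: "\<forall>k<m. (mat_adjoint U3 * A3 * U3) $$ (k, k) = es ! k"
    using Cons.IH[OF A3] by blast
  define D where "D = four_block_mat (1\<^sub>m 1) (0\<^sub>m 1 m) (0\<^sub>m m 1) U3"
  have D: "unitary_mat (Suc m) D"
    using unitary_mat_four_block_diag[of 1 "1\<^sub>m 1" m U3] U3 by (simp add: D_def unitary_mat_def)
  have Wc: "W \<in> carrier_mat (Suc m) (Suc m)" and Dc: "D \<in> carrier_mat (Suc m) (Suc m)"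
    using W D by (simp_all add: unitary_mat_def)
  have "mat_adjoint (W * D) * A * (W * D) = mat_adjoint D * (mat_adjoint W * A * W) * D"
    using Wc Dc A by (simp add: mat_adjoint_mult[OF Wc Dc] assoc_mult_mat[of _ "Suc m" "Suc m" _ "Suc m" _ "Suc m"]
      mult_carrier_mat[of _ "Suc m" "Suc m" _ "Suc m"])
  also have "\<dots> = four_block_mat (mat 1 1 (\<lambda>_. e)) (A2 * U3) (0\<^sub>m m 1) (mat_adjoint U3 * A3 * U3)"
    unfolding WAW D_def using A2 A3 U3 by (intro four_block_diag_mult) (auto simp: unitary_mat_def)
  finally have "\<forall>k<n. (mat_adjoint (W * D) * A * (W * D)) $$ (k, k) = (e # es) ! k"
    using diag3 A2 A3 U3 n by (auto simp: unitary_mat_def nth_Cons' less_Suc_eq_0_disj)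
  then show ?case using unitary_mat_mult[OF W D] n by blast
qed

lemma index_mult_mat_sum:
  assumes "A \<in> carrier_mat m n" "B \<in> carrier_mat n k" "i < m" "j < k"
  shows "(A * B) $$ (i, j) = (\<Sum>l<n. A $$ (i, l) * B $$ (l, j))"
  using assms by (simp add: scalar_prod_def lessThan_atLeast0)

lemma index_mat_adjoint_conj:
  assumes U: "U \<in> carrier_mat n n" and A: "A \<in> carrier_mat n n" and k: "k < n" "k' < n"
  shows "(mat_adjoint U * A * U) $$ (k, k')
    = (\<Sum>i<n. \<Sum>j<n. conjugate (U $$ (i, k)) * A $$ (i, j) * U $$ (j, k'))"
proof -
  have UA: "mat_adjoint U * A \<in> carrier_mat n n" and U': "mat_adjoint U \<in> carrier_mat n n"
    using U A by (auto intro!: mult_carrier_mat)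
  have "(mat_adjoint U * A * U) $$ (k, k') = (\<Sum>j<n. (mat_adjoint U * A) $$ (k, j) * U $$ (j, k'))"
    using k by (rule index_mult_mat_sum[OF UA U])
  also have "\<dots> = (\<Sum>j<n. (\<Sum>i<n. conjugate (U $$ (i, k)) * A $$ (i, j)) * U $$ (j, k'))"
  proof (rule sum.cong[OF refl])
    fix j assume "j \<in> {..<n}"
    then have "(mat_adjoint U * A) $$ (k, j) = (\<Sum>i<n. mat_adjoint U $$ (k, i) * A $$ (i, j))"
      using k by (intro index_mult_mat_sum[OF U' A]) auto
    also have "\<dots> = (\<Sum>i<n. conjugate (U $$ (i, k)) * A $$ (i, j))"
      using U k by (intro sum.cong refl) auto
    finally show "(mat_adjoint U * A) $$ (k, j) * U $$ (j, k')
      = (\<Sum>i<n. conjugate (U $$ (i, k)) * A $$ (i, j)) * U $$ (j, k')" by simp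
  qed
  also have "\<dots> = (\<Sum>i<n. \<Sum>j<n. conjugate (U $$ (i, k)) * A $$ (i, j) * U $$ (j, k'))"
    unfolding sum_distrib_right by (rule sum.swap)
  finally show ?thesis .
qed

lemma sum_cmod_sq_unitary:
  assumes "unitary_mat n U"
  shows "(\<Sum>k<n. (cmod (\<Sum>i<n. U $$ (i, k) * x i))\<^sup>2) = (\<Sum>i<n. (cmod (x i))\<^sup>2)"
proof -
  have U: "U \<in> carrier_mat n n" using assms by (simp add: unitary_mat_def)
  have orth: "(\<Sum>k<n. U $$ (i, k) * cnj (U $$ (j, k))) = (if i = j then 1 else 0)"
    if "i < n" "j < n" for i j
    using arg_cong[OF unitary_mat_right_inverse[OF assms], of "\<lambda>M. M $$ (i, j)"] U that
    by (simp add: scalar_prod_def lessThan_atLeast0)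
  have "complex_of_real (\<Sum>k<n. (cmod (\<Sum>i<n. U $$ (i, k) * x i))\<^sup>2)
      = (\<Sum>k<n. \<Sum>i<n. \<Sum>j<n. x i * cnj (x j) * (U $$ (i, k) * cnj (U $$ (j, k))))"
    unfolding of_real_sum complex_norm_square cnj_sum sum_product
    by (intro sum.cong refl) (simp add: mult_ac)
  also have "\<dots> = (\<Sum>i<n. \<Sum>j<n. x i * cnj (x j) * (\<Sum>k<n. U $$ (i, k) * cnj (U $$ (j, k))))"
    unfolding sum_distrib_left by (subst sum.swap) (intro sum.cong refl sum.swap)
  also have "\<dots> = (\<Sum>i<n. x i * cnj (x i))"
  proof (rule sum.cong[OF refl])
    fix i assume "i \<in> {..<n}"
    then show "(\<Sum>j<n. x i * cnj (x j) * (\<Sum>k<n. U $$ (i, k) * cnj (U $$ (j, k)))) = x i * cnj (x i)"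
      by (simp add: orth if_distrib[of "(*) _"] cong: if_cong)
  qed
  also have "\<dots> = complex_of_real (\<Sum>i<n. (cmod (x i))\<^sup>2)"
    unfolding of_real_sum complex_norm_square ..
  finally show ?thesis by (simp only: of_real_eq_iff)
qed

lemma sum_cmod_eigenvalues_le:
  fixes A :: "complex mat" and l r :: "'t \<Rightarrow> nat \<Rightarrow> complex"
  assumes A: "A \<in> carrier_mat n n" and cp: "char_poly A = (\<Prod>e\<leftarrow>es. [:- e, 1:])"
    and T: "finite T" and fac: "\<And>i j. i < n \<Longrightarrow> j < n \<Longrightarrow> A $$ (i, j) = (\<Sum>t\<in>T. l t i * r t j)"
  shows "(\<Sum>e\<leftarrow>es. cmod e) \<le> (\<Sum>t\<in>T. (\<Sum>i<n. (cmod (l t i))\<^sup>2) + (\<Sum>i<n. (cmod (r t i))\<^sup>2)) / 2"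
proof -
  have len: "length es = n"
    using degree_monic_char_poly[OF A] degree_linear_factors[of uminus es] by (simp add: cp)
  obtain U where U: "unitary_mat n U" and diag: "\<forall>k<n. (mat_adjoint U * A * U) $$ (k, k) = es ! k"
    using unitary_schur_diagonal[OF A cp] by blast
  have Uc: "U \<in> carrier_mat n n" using U by (simp add: unitary_mat_def)
  define \<alpha> where "\<alpha> t k = (\<Sum>i<n. U $$ (i, k) * cnj (l t i))" for t k
  define \<beta> where "\<beta> t k = (\<Sum>j<n. U $$ (j, k) * r t j)" for t k
  have eig: "es ! k = (\<Sum>t\<in>T. cnj (\<alpha> t k) * \<beta> t k)" if k: "k < n" for k
  proof -
    have "es ! k = (\<Sum>i<n. \<Sum>j<n. cnj (U $$ (i, k)) * A $$ (i, j) * U $$ (j, k))"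
      using diag index_mat_adjoint_conj[OF Uc A k k] k by simp
    also have "\<dots> = (\<Sum>i<n. \<Sum>j<n. \<Sum>t\<in>T. cnj (U $$ (i, k)) * l t i * (r t j * U $$ (j, k)))"
      by (intro sum.cong refl) (simp add: fac sum_distrib_left sum_distrib_right mult_ac)
    also have "\<dots> = (\<Sum>t\<in>T. \<Sum>i<n. \<Sum>j<n. cnj (U $$ (i, k)) * l t i * (r t j * U $$ (j, k)))"
      by (subst sum.swap) (intro sum.cong refl sum.swap)
    also have "\<dots> = (\<Sum>t\<in>T. cnj (\<alpha> t k) * \<beta> t k)"
      unfolding \<alpha>_def \<beta>_def cnj_sum sum_product by (intro sum.cong refl) (simp add: mult_ac)
    finally show ?thesis .
  qed
  have "(\<Sum>e\<leftarrow>es. cmod e) = (\<Sum>k<n. cmod (\<Sum>t\<in>T. cnj (\<alpha> t k) * \<beta> t k))"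
    by (simp add: sum_list_sum_nth len lessThan_atLeast0 eig)
  also have "\<dots> \<le> (\<Sum>k<n. \<Sum>t\<in>T. ((cmod (\<alpha> t k))\<^sup>2 + (cmod (\<beta> t k))\<^sup>2) / 2)"
  proof (intro sum_mono order.trans[OF norm_sum])
    fix k t
    have "0 \<le> (cmod (\<alpha> t k) - cmod (\<beta> t k))\<^sup>2" by simp
    then show "cmod (cnj (\<alpha> t k) * \<beta> t k) \<le> ((cmod (\<alpha> t k))\<^sup>2 + (cmod (\<beta> t k))\<^sup>2) / 2"
      by (simp add: norm_mult power2_diff)
  qed
  also have "\<dots> = (\<Sum>t\<in>T. ((\<Sum>k<n. (cmod (\<alpha> t k))\<^sup>2) + (\<Sum>k<n. (cmod (\<beta> t k))\<^sup>2)) / 2)"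
    by (subst sum.swap) (simp add: sum.distrib add_divide_distrib sum_divide_distrib)
  also have "\<dots> = (\<Sum>t\<in>T. (\<Sum>i<n. (cmod (l t i))\<^sup>2) + (\<Sum>i<n. (cmod (r t i))\<^sup>2)) / 2"
    unfolding \<alpha>_def \<beta>_def sum_cmod_sq_unitary[OF U] by (simp only: complex_mod_cnj sum_divide_distrib)
  finally show ?thesis .
qed

lemma proots_linear_factors: "proots (\<Prod>e\<leftarrow>es. [:- e, 1:]) = mset (es :: 'a :: idom list)"
proof (induction es)
  case (Cons e es)
  have "(\<Prod>e\<leftarrow>es. [:- e, 1:]) \<noteq> (0 :: 'a poly)" by (auto simp: prod_list_zero_iff)
  then show ?case by (simp add: proots_mult Cons.IH del: mult_pCons_left)
qed simp

lemma energy_le_factorization: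
  fixes l r :: "'t \<Rightarrow> nat \<Rightarrow> real"
  assumes T: "finite T"
    and fac: "\<And>i j. i < n \<Longrightarrow> j < n \<Longrightarrow> (if E i j then 1 else 0) = (\<Sum>t\<in>T. l t i * r t j)"
  shows "energy n E \<le> (\<Sum>t\<in>T. (\<Sum>i<n. (l t i)\<^sup>2) + (\<Sum>i<n. (r t i)\<^sup>2)) / 2"
proof -
  have A: "adj_matrix n E \<in> carrier_mat n n" by (simp add: adj_matrix_def)
  obtain es where cp: "char_poly (adj_matrix n E) = (\<Prod>e\<leftarrow>es. [:- e, 1:])"
    using char_poly_factorized[OF A] by blast
  have "energy n E = (\<Sum>e\<leftarrow>es. cmod e)"
    by (simp add: energy_def cp proots_linear_factors sum_mset_sum_list flip: mset_map)
  also have "\<dots> \<le> (\<Sum>t\<in>T. (\<Sum>i<n. (cmod (of_real (l t i)))\<^sup>2) + (\<Sum>i<n. (cmod (of_real (r t i)))\<^sup>2)) / 2"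
  proof (rule sum_cmod_eigenvalues_le[OF A cp T])
    fix i j assume ij: "i < n" "j < n"
    then have "adj_matrix n E $$ (i, j) = complex_of_real (if E i j then 1 else 0)"
      by (simp add: adj_matrix_def)
    then show "adj_matrix n E $$ (i, j) = (\<Sum>t\<in>T. complex_of_real (l t i) * complex_of_real (r t j))"
      unfolding fac[OF ij] of_real_sum of_real_mult .
  qed
  finally show ?thesis by simp
qed

lemma energy_le_symmetric_factorization:
  fixes x y :: "'t \<Rightarrow> nat \<Rightarrow> real"
  assumes T: "finite T" and fac: "\<And>i j. i < n \<Longrightarrow> j < n \<Longrightarrow>
      (if E i j then 1 else 0) = (\<Sum>t\<in>T. x t i * y t j + y t i * x t j)"
  shows "energy n E \<le> (\<Sum>t\<in>T. (\<Sum>i<n. (x t i)\<^sup>2) + (\<Sum>i<n. (y t i)\<^sup>2))"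
proof -
  define l where "l = (\<lambda>(t, b). if b then y t else x t)"
  define r where "r = (\<lambda>(t, b). if b then x t else y t)"
  have sum_pairs: "(\<Sum>p\<in>T \<times> UNIV. f p) = (\<Sum>t\<in>T. f (t, False) + f (t, True))" for f :: "'t \<times> bool \<Rightarrow> real"
    unfolding sum.cartesian_product' by (simp add: UNIV_bool)
  have "energy n E \<le> (\<Sum>p\<in>T \<times> UNIV. (\<Sum>i<n. (l p i)\<^sup>2) + (\<Sum>i<n. (r p i)\<^sup>2)) / 2"
    using T fac by (intro energy_le_factorization) (simp_all add: sum_pairs l_def r_def)
  also have "\<dots> = (\<Sum>t\<in>T. (\<Sum>i<n. (x t i)\<^sup>2) + (\<Sum>i<n. (y t i)\<^sup>2))"
    by (simp add: sum_pairs l_def r_def sum.distrib sum_divide_distrib[symmetric])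
  finally show ?thesis .
qed

definition parent_graph :: "nat \<Rightarrow> (nat \<Rightarrow> nat) \<Rightarrow> nat \<Rightarrow> nat \<Rightarrow> bool" where
  "parent_graph n p i j \<longleftrightarrow> i < n \<and> j < n \<and> (0 < i \<and> j = p i \<or> 0 < j \<and> i = p j)"

lemma parent_graph_sym: "parent_graph n p i j \<longleftrightarrow> parent_graph n p j i"
  unfolding parent_graph_def by blast

lemma is_cycle_adj_mod:
  assumes c: "is_cycle n E vs" and q: "q < length vs"
  shows "E (vs ! q) (vs ! ((q + 1) mod length vs))"
proof (cases "Suc q < length vs")
  case True
  then show ?thesis using c by (simp add: is_cycle_def)
next
  case False
  then have "q = length vs - 1" "vs \<noteq> []" using q by auto
  then show ?thesis
    using c by (simp add: is_cycle_def last_conv_nth hd_conv_nth)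
qed

lemma not_is_cycle_if_unique_lower_neighbour:
  assumes sym: "\<And>i j. E i j \<Longrightarrow> E j i"
    and uniq: "\<And>i j k. E i j \<Longrightarrow> E i k \<Longrightarrow> j < i \<Longrightarrow> k < i \<Longrightarrow> j = k"
  shows "\<not> is_cycle n E vs"
proof
  assume c: "is_cycle n E vs"
  define L where "L = length vs"
  have L3: "3 \<le> L" and dist: "distinct vs" using c by (auto simp: is_cycle_def L_def)
  then obtain p where p: "p < L" "vs ! p = Max (set vs)"
    using Max_in[of "set vs"] by (metis L_def List.finite_set in_set_conv_nth list.size(3) not_numeral_le_zero set_empty)
  define q where "q = (p + L - 1) mod L"
  define r where "r = (p + 1) mod L"
  have qr: "q < L" "r < L" "q \<noteq> p" "r \<noteq> p" "q \<noteq> r" "(q + 1) mod L = p"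
    using p(1) L3 unfolding q_def r_def by (auto simp: mod_if)
  have "E (vs ! p) (vs ! q)" using sym is_cycle_adj_mod[OF c, of q] qr unfolding L_def by simp
  moreover have "E (vs ! p) (vs ! r)" using is_cycle_adj_mod[OF c, of p] p unfolding L_def r_def by simp
  moreover have "vs ! q \<noteq> vs ! p" "vs ! r \<noteq> vs ! p" "vs ! q \<noteq> vs ! r"
    using dist qr p(1) unfolding L_def by (simp_all add: nth_eq_iff_index_eq)
  moreover have "vs ! q \<le> vs ! p" "vs ! r \<le> vs ! p" using p(2) qr unfolding L_def by simp_all
  ultimately show False using uniq by (metis order_less_le)
qed

lemma sum_indicator_parent_edge:
  fixes n :: nat and p :: "nat \<Rightarrow> nat"
  shows "(\<Sum>v\<in>{1..<n}. if i = v \<and> j = p v then 1 else 0 :: 'a :: semiring_1)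
    = (if 0 < i \<and> i < n \<and> j = p i then 1 else 0)"
proof -
  have "(\<Sum>v\<in>{1..<n}. if i = v \<and> j = p v then 1 else 0 :: 'a)
      = (\<Sum>v\<in>{1..<n}. if v = i then (if j = p i then 1 else 0) else 0)"
    by (intro sum.cong) auto
  also have "\<dots> = (if i \<in> {1..<n} then (if j = p i then 1 else 0) else 0)"
    by (rule sum.delta) (rule finite_atLeastLessThan)
  finally show ?thesis by auto
qed

context
  fixes n :: nat and p :: "nat \<Rightarrow> nat"
  assumes parent_less: "\<And>v. 0 < v \<Longrightarrow> v < n \<Longrightarrow> p v < v"
begin

lemma simple_graph_parent_graph: "simple_graph n (parent_graph n p)"
  unfolding simple_graph_def
proof (intro allI impI)
  fix i j assume e: "parent_graph n p i j"
  then have "i \<noteq> j" using parent_less unfolding parent_graph_def by (metis less_irrefl)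
  with e show "i < n \<and> j < n \<and> i \<noteq> j \<and> parent_graph n p j i"
    using parent_graph_sym[of n p i j] unfolding parent_graph_def by blast
qed

lemma parent_graph_reaches_root: "v < n \<Longrightarrow> (parent_graph n p)\<^sup>*\<^sup>* v 0"
proof (induction v rule: less_induct)
  case (less v)
  show ?case
  proof (cases "v = 0")
    case False
    then have "p v < v" using parent_less less.prems by simp
    moreover have "parent_graph n p v (p v)" using \<open>p v < v\<close> less.prems False by (simp add: parent_graph_def)
    ultimately show ?thesis using less by (meson converse_rtranclp_into_rtranclp order.strict_trans)
  qed simp
qed

lemma graph_connected_parent_graph: "graph_connected n (parent_graph n p)"
proof -
  have "(parent_graph n p)\<inverse>\<inverse> = parent_graph n p" by (auto simp: fun_eq_iff parent_graph_sym)
  then have "(parent_graph n p)\<^sup>*\<^sup>* 0 v" if "v < n" for v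
    using rtranclp_converseI[OF parent_graph_reaches_root[OF that]] by simp
  then show ?thesis
    unfolding graph_connected_def using parent_graph_reaches_root by (blast intro: rtranclp_trans)
qed

lemma is_tree_parent_graph: "is_tree n (parent_graph n p)"
proof -
  have "\<not> is_cycle n (parent_graph n p) vs" for vs
  proof (rule not_is_cycle_if_unique_lower_neighbour)
    fix i j k assume "parent_graph n p i j" "parent_graph n p i k" "j < i" "k < i"
    then show "j = k" using parent_less unfolding parent_graph_def by (metis less_asym)
  qed (simp add: parent_graph_sym)
  then show ?thesis
    unfolding is_tree_def using simple_graph_parent_graph graph_connected_parent_graph by blast
qed

lemma degree_of_parent_graph:
  assumes v: "v < n"
  shows "degree_of n (parent_graph n p) v = (if v = 0 then 0 else 1) + card {u. 0 < u \<and> u < n \<and> p u = v}"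
proof -
  have "0 < v \<Longrightarrow> p v < n" using v parent_less[of v] by simp
  then have nbrs: "{u. u < n \<and> parent_graph n p v u} = {u. 0 < v \<and> u = p v} \<union> {u. 0 < u \<and> u < n \<and> p u = v}"
    using v unfolding parent_graph_def by blast
  have "{u. 0 < v \<and> u = p v} \<inter> {u. 0 < u \<and> u < n \<and> p u = v} = {}"
    using v parent_less by (metis (mono_tags, lifting) disjoint_iff less_asym mem_Collect_eq order.strict_trans)
  then have "degree_of n (parent_graph n p) v = card {u. 0 < v \<and> u = p v} + card {u. 0 < u \<and> u < n \<and> p u = v}"
    unfolding degree_of_def nbrs by (intro card_Un_disjoint) auto
  then show ?thesis by (cases "v = 0") auto
qed

lemma parent_graph_indicator:
  "(if parent_graph n p i j then 1 else 0 :: 'a :: semiring_1)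
    = (\<Sum>v\<in>{1..<n}. (if i = v \<and> j = p v then 1 else 0) + (if i = p v \<and> j = v then 1 else 0))"
proof -
  have down: "(\<Sum>v\<in>{1..<n}. if i = p v \<and> j = v then 1 else 0 :: 'a)
      = (if 0 < j \<and> j < n \<and> i = p j then 1 else 0)"
    unfolding sum_indicator_parent_edge[where i = j and j = i, symmetric] by (intro sum.cong) auto
  have "\<not> ((0 < i \<and> i < n \<and> j = p i) \<and> (0 < j \<and> j < n \<and> i = p j))"
    using parent_less by (metis less_asym)
  moreover have "parent_graph n p i j \<longleftrightarrow> (0 < i \<and> i < n \<and> j = p i) \<or> (0 < j \<and> j < n \<and> i = p j)"
    using parent_less unfolding parent_graph_def by (metis order.strict_trans)
  ultimately show ?thesis
    unfolding sum.distrib sum_indicator_parent_edge down by (auto simp del: One_nat_def)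
qed

end

lemma sub_max_one_mod4_cases:
  fixes u v N :: nat
  assumes "u - max 1 ((u - N) mod 4) = v" "N \<le> u" "0 < u"
  shows "u \<in> {v + 1, v + 2, v + 3}" "v < N \<Longrightarrow> u = N \<and> v = N - 1"
proof -
  define r where "r = (u - N) mod 4"
  have r: "r \<le> u - N" "r < 4" "v = u - max 1 r"
    using assms(1) by (simp_all add: r_def mod_less_eq_dividend)
  then show "u \<in> {v + 1, v + 2, v + 3}"
    using assms(2,3) by (auto simp: max_def)
  have "u - N < 4 \<Longrightarrow> r = u - N" by (simp add: r_def)
  then show "v < N \<Longrightarrow> u = N \<and> v = N - 1"
    using r(1,3) assms(2) by (auto simp: max_def)
qed

definition chain_parent :: "nat \<Rightarrow> (nat \<Rightarrow> nat) \<Rightarrow> nat \<Rightarrow> nat" where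
  "chain_parent N p v = (if v < N then p v else v - max 1 ((v - N) mod 4))"

context
  fixes N :: nat and p :: "nat \<Rightarrow> nat"
  assumes base_parent_less: "\<And>v. 0 < v \<Longrightarrow> v < N \<Longrightarrow> p v < v"
begin

lemma chain_parent_less:
  assumes "0 < v"
  shows "chain_parent N p v < v"
proof (cases "v < N")
  case False
  have "0 < max 1 ((v - N) mod 4)" by simp
  then show ?thesis using False assms unfolding chain_parent_def by (simp only: if_False diff_less)
qed (simp add: chain_parent_def base_parent_less assms)

lemma chain_children_above:
  assumes "N \<le> v"
  shows "{u. 0 < u \<and> u < n \<and> chain_parent N p u = v} \<subseteq> {v + 1, v + 2, v + 3}"
proof
  fix u assume "u \<in> {u. 0 < u \<and> u < n \<and> chain_parent N p u = v}"
  then have u: "0 < u" "chain_parent N p u = v" by simp_all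
  have "N \<le> u"
  proof (rule ccontr)
    assume "\<not> N \<le> u"
    then have "chain_parent N p u < N" using base_parent_less[OF u(1)] by (simp add: chain_parent_def)
    then show False using u(2) assms by simp
  qed
  then show "u \<in> {v + 1, v + 2, v + 3}"
    using u by (intro sub_max_one_mod4_cases(1)) (simp_all add: chain_parent_def)
qed

lemma chain_children_below:
  assumes "v < N" "N \<le> n"
  shows "{u. 0 < u \<and> u < n \<and> chain_parent N p u = v}
    = {u. 0 < u \<and> u < N \<and> p u = v} \<union> {u. u = N \<and> u < n \<and> v = N - 1}"
proof (intro equalityI subsetI)
  fix u assume "u \<in> {u. 0 < u \<and> u < n \<and> chain_parent N p u = v}"
  then have u: "0 < u" "u < n" "chain_parent N p u = v" by simp_all
  show "u \<in> {u. 0 < u \<and> u < N \<and> p u = v} \<union> {u. u = N \<and> u < n \<and> v = N - 1}"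
  proof (cases "u < N")
    case False
    then have "u - max 1 ((u - N) mod 4) = v" using u(3) by (simp add: chain_parent_def)
    then have "u = N \<and> v = N - 1"
      using False u(1) assms(1) by (intro sub_max_one_mod4_cases(2)) simp_all
    then show ?thesis using u(2) by blast
  qed (use u in \<open>simp add: chain_parent_def\<close>)
next
  fix u assume "u \<in> {u. 0 < u \<and> u < N \<and> p u = v} \<union> {u. u = N \<and> u < n \<and> v = N - 1}"
  then show "u \<in> {u. 0 < u \<and> u < n \<and> chain_parent N p u = v}"
    using assms by (auto simp: chain_parent_def)
qed

end

definition star_neighbours :: "nat \<Rightarrow> nat set" where
  "star_neighbours c = {c - 1, c + 1, c + 2, c + 3}"

lemma chain_star_block_indicator:
  fixes N s :: nat
  assumes "0 < N"
  defines "c \<equiv> N + 4 * s"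
  shows "(\<Sum>v\<in>{c..<c + 4}. (if i = v \<and> j = chain_parent N p v then 1 else 0)
      + (if i = chain_parent N p v \<and> j = v then 1 else 0))
    = (if i = c \<and> j \<in> star_neighbours c then 1 else 0) + (if i \<in> star_neighbours c \<and> j = c then 1 else (0 :: real))"
proof -
  have "{c..<c + 4} = {c, c + 1, c + 2, c + 3}" by auto
  moreover have cp: "chain_parent N p (c + r) = (if r = 0 then c - 1 else c)" if "r < 4" for r
  proof -
    have "(c + r - N) mod 4 = r" using that by (simp add: c_def add.commute[of "4 * s"])
    then show ?thesis using that by (auto simp: chain_parent_def c_def max_def)
  qed
  then have "chain_parent N p c = c - 1" "chain_parent N p (c + 1) = c"
    "chain_parent N p (c + 2) = c" "chain_parent N p (c + 3) = c"
    using cp[of 0] cp[of 1] cp[of 2] cp[of 3] by simp_all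
  moreover have "0 < c" using assms by simp
  ultimately show ?thesis
    by (cases "i = c"; cases "j = c") (auto simp: star_neighbours_def)
qed

lemma chain_tree_indicator:
  assumes base_less: "\<And>v. 0 < v \<Longrightarrow> v < N \<Longrightarrow> p v < v" and N: "0 < N"
  shows "(if parent_graph (N + 4 * k) (chain_parent N p) i j then 1 else 0 :: real)
    = (if parent_graph N p i j then 1 else 0)
      + (\<Sum>s<k. (if i = N + 4 * s \<and> j \<in> star_neighbours (N + 4 * s) then 1 else 0)
          + (if i \<in> star_neighbours (N + 4 * s) \<and> j = N + 4 * s then 1 else 0))"
proof -
  define f :: "nat \<Rightarrow> real" where "f v = (if i = v \<and> j = chain_parent N p v then 1 else 0)
      + (if i = chain_parent N p v \<and> j = v then 1 else 0)" for v
  have "sum f {1..<N + 4 * k} = (if parent_graph N p i j then 1 else 0)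
      + (\<Sum>s<k. (if i = N + 4 * s \<and> j \<in> star_neighbours (N + 4 * s) then 1 else 0)
          + (if i \<in> star_neighbours (N + 4 * s) \<and> j = N + 4 * s then 1 else 0))"
  proof (induction k)
    case 0
    have "sum f {1..<N} = (if parent_graph N p i j then 1 else 0)"
      unfolding f_def by (subst parent_graph_indicator[OF base_less]) (auto intro!: sum.cong simp: chain_parent_def)
    then show ?case by simp
  next
    case (Suc k)
    have "sum f {1..<N + 4 * Suc k} = sum f {1..<N + 4 * k} + sum f {N + 4 * k..<N + 4 * k + 4}"
      using N by (simp add: sum.atLeastLessThan_concat algebra_simps)
    moreover have "sum f {N + 4 * k..<N + 4 * k + 4}
        = (if i = N + 4 * k \<and> j \<in> star_neighbours (N + 4 * k) then 1 else 0)
          + (if i \<in> star_neighbours (N + 4 * k) \<and> j = N + 4 * k then 1 else 0)"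
      unfolding f_def by (rule chain_star_block_indicator[OF N])
    ultimately show ?case using Suc.IH by (simp add: add.assoc)
  qed
  moreover have "(if parent_graph (N + 4 * k) (chain_parent N p) i j then 1 else 0) = sum f {1..<N + 4 * k}"
    unfolding f_def by (rule parent_graph_indicator) (rule chain_parent_less[OF base_less])
  ultimately show ?thesis by simp
qed

lemma max_degree_chain_tree:
  assumes hub: "\<And>v. 0 < v \<Longrightarrow> v < N \<Longrightarrow> p v < min v h" and h: "h < N"
    and root: "card {u. 0 < u \<and> u < N \<and> p u = 0} = 4"
    and others: "\<And>v. 0 < v \<Longrightarrow> v < N \<Longrightarrow> card {u. 0 < u \<and> u < N \<and> p u = v} \<le> 3"
    and n: "N \<le> n"
  shows "max_degree n (parent_graph n (chain_parent N p)) = 4"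
proof -
  have base_less: "\<And>v. 0 < v \<Longrightarrow> v < N \<Longrightarrow> p v < v" using hub by fastforce
  let ?children = "\<lambda>v. {u. 0 < u \<and> u < n \<and> chain_parent N p u = v}"
  have deg: "degree_of n (parent_graph n (chain_parent N p)) v = (if v = 0 then 0 else 1) + card (?children v)"
    if "v < n" for v
    using degree_of_parent_graph[OF chain_parent_less[OF base_less] that] by simp
  have N2: "2 \<le> N"
  proof (rule ccontr)
    assume "\<not> 2 \<le> N"
    then have "{u. 0 < u \<and> u < N \<and> p u = 0} = {}" by auto
    then show False using root by (metis card.empty zero_neq_numeral)
  qed
  have children_le: "card (?children v) \<le> 3" if v: "0 < v" "v < n" for v
  proof (cases "v < N")
    case True
    show ?thesis
    proof (cases "v = N - 1")
      case True
      have "p u \<noteq> v" if "0 < u" "u < N" for u using hub[OF that] h True by linarith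
      then have "{u. 0 < u \<and> u < N \<and> p u = v} = {}" by blast
      then have "?children v \<subseteq> {N}"
        using chain_children_below[OF base_less \<open>v < N\<close> n] by blast
      then have "card (?children v) \<le> card {N}" by (intro card_mono) simp_all
      then show ?thesis by simp
    next
      case False
      then show ?thesis
        using chain_children_below[OF base_less \<open>v < N\<close> n] others[OF v(1) \<open>v < N\<close>] by simp
    qed
  next
    case False
    then have "card (?children v) \<le> card {v + 1, v + 2, v + 3}"
      by (intro card_mono chain_children_above[OF base_less]) auto
    also have "\<dots> \<le> 3" by (simp add: card_insert_if)
    finally show ?thesis .
  qed
  have "card (?children 0) = 4"
    using chain_children_below[OF base_less _ n, of 0] N2 root by simp
  then show ?thesis
    unfolding max_degree_def using N2 n deg children_le
    by (intro Max_eqI) (fastforce intro: rev_image_eqI[of 0])+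
qed

lemma energy_chain_tree_le:
  fixes x y :: "'t \<Rightarrow> nat \<Rightarrow> real"
  assumes base_less: "\<And>v. 0 < v \<Longrightarrow> v < N \<Longrightarrow> p v < v" and N: "0 < N" and T: "finite T"
    and base: "\<And>i j. i < N \<Longrightarrow> j < N \<Longrightarrow>
      (if parent_graph N p i j then 1 else 0) = (\<Sum>t\<in>T. x t i * y t j + y t i * x t j)"
  shows "energy (N + 4 * k) (parent_graph (N + 4 * k) (chain_parent N p))
    \<le> (\<Sum>t\<in>T. (\<Sum>i<N. (x t i)\<^sup>2) + (\<Sum>i<N. (y t i)\<^sup>2)) + 4 * k"
proof -
  define n where "n = N + 4 * k"
  define x' where "x' = (\<lambda>u i. case u of Inl t \<Rightarrow> if i < N then x t i else 0
    | Inr s \<Rightarrow> if i = N + 4 * s then sqrt 2 else 0)"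
  define y' where "y' = (\<lambda>u i. case u of Inl t \<Rightarrow> if i < N then y t i else 0
    | Inr s \<Rightarrow> if i \<in> star_neighbours (N + 4 * s) then 1 / sqrt 2 else 0)"
  have base_restricted: "(\<Sum>t\<in>T. x' (Inl t) i * y' (Inl t) j + y' (Inl t) i * x' (Inl t) j)
      = (if parent_graph N p i j then 1 else 0)" for i j
  proof (cases "i < N \<and> j < N")
    case True
    then show ?thesis using base[of i j] by (simp add: x'_def y'_def)
  next
    case False
    then show ?thesis by (auto simp: x'_def y'_def parent_graph_def)
  qed
  have star: "x' (Inr s) i * y' (Inr s) j + y' (Inr s) i * x' (Inr s) j
      = (if i = N + 4 * s \<and> j \<in> star_neighbours (N + 4 * s) then 1 else 0)
        + (if i \<in> star_neighbours (N + 4 * s) \<and> j = N + 4 * s then 1 else 0)" for s i j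
    by (simp add: x'_def y'_def)
  have "energy n (parent_graph n (chain_parent N p))
      \<le> (\<Sum>u\<in>T <+> {..<k}. (\<Sum>i<n. (x' u i)\<^sup>2) + (\<Sum>i<n. (y' u i)\<^sup>2))"
  proof (rule energy_le_symmetric_factorization)
    fix i j assume "i < n" "j < n"
    show "(if parent_graph n (chain_parent N p) i j then 1 else 0)
      = (\<Sum>u\<in>T <+> {..<k}. x' u i * y' u j + y' u i * x' u j)"
      unfolding n_def sum.Plus[OF T finite_lessThan] comp_def base_restricted star
      by (rule chain_tree_indicator[OF base_less N])
  qed (use T in simp)
  also have "\<dots> = (\<Sum>t\<in>T. (\<Sum>i<N. (x t i)\<^sup>2) + (\<Sum>i<N. (y t i)\<^sup>2)) + 4 * k"
  proof -
    have restrict: "(\<Sum>i<n. (if i < N then a i else 0)\<^sup>2) = (\<Sum>i<N. (a i)\<^sup>2)" for a :: "nat \<Rightarrow> real"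
      by (rule sum.mono_neutral_cong_right) (auto simp: n_def)
    have star_cost: "(\<Sum>i<n. (x' (Inr s) i)\<^sup>2) + (\<Sum>i<n. (y' (Inr s) i)\<^sup>2) = 4" if "s < k" for s
    proof -
      have L: "star_neighbours (N + 4 * s) \<subseteq> {..<n}" "card (star_neighbours (N + 4 * s)) = 4"
        using that N by (auto simp: star_neighbours_def n_def card_insert_if)
      have "(\<Sum>i<n. (x' (Inr s) i)\<^sup>2) = (\<Sum>i<n. if i = N + 4 * s then 2 else 0)"
        by (intro sum.cong) (auto simp: x'_def)
      moreover have "(\<Sum>i<n. (y' (Inr s) i)\<^sup>2) = (\<Sum>i<n. if i \<in> star_neighbours (N + 4 * s) then 1 / 2 else 0)"
        by (intro sum.cong) (auto simp: y'_def power_divide)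
      ultimately show ?thesis
        using that L by (simp add: sum.If_cases Int_absorb1 n_def)
    qed
    have "x' (Inl t) = (\<lambda>i. if i < N then x t i else 0)" "y' (Inl t) = (\<lambda>i. if i < N then y t i else 0)" for t
      by (simp_all add: x'_def y'_def)
    then show ?thesis
      unfolding sum.Plus[OF T finite_lessThan] comp_def by (simp add: restrict star_cost)
  qed
  finally show ?thesis unfolding n_def .
qed

definition hub_parent_list :: "nat \<Rightarrow> nat list \<Rightarrow> bool" where
  "hub_parent_list h pb \<longleftrightarrow> h < length pb \<and> (\<forall>v\<in>{1..<length pb}. pb ! v < min v h)"

definition vertex_type :: "nat \<Rightarrow> nat list \<Rightarrow> nat \<Rightarrow> nat" where
  "vertex_type h pb i = (if i < h then i else h + pb ! i)"

definition type_parent :: "nat \<Rightarrow> nat list \<Rightarrow> nat \<Rightarrow> nat" where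
  "type_parent h pb a = (if a < h then pb ! a else a - h)"

lemma parent_graph_vertex_type:
  assumes hub: "hub_parent_list h pb" and i: "i < length pb" and j: "j < length pb"
  shows "parent_graph (length pb) (nth pb) i j
    \<longleftrightarrow> parent_graph (2 * h) (type_parent h pb) (vertex_type h pb i) (vertex_type h pb j)"
proof -
  have hub': "\<And>v. 0 < v \<Longrightarrow> v < length pb \<Longrightarrow> pb ! v < v \<and> pb ! v < h"
    using hub by (auto simp: hub_parent_list_def)
  show ?thesis
    using hub'[of i] hub'[of j] i j
    by (auto simp: parent_graph_def vertex_type_def type_parent_def)
qed

type_synonym sparse_vec = "(nat \<times> rat) list"

definition coord :: "sparse_vec \<Rightarrow> nat \<Rightarrow> rat" where
  "coord xs a = (case map_of xs a of Some c \<Rightarrow> c | None \<Rightarrow> 0)"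

lemma coord_notin:
  assumes "a \<notin> fst ` set xs"
  shows "coord xs a = 0"
proof -
  have "map_of xs a = None" using assms by (simp add: map_of_eq_None_iff)
  then show ?thesis by (simp add: coord_def)
qed

definition bipartite_certificate ::
  "(nat \<Rightarrow> nat \<Rightarrow> bool) \<Rightarrow> nat list \<Rightarrow> nat list \<Rightarrow> (sparse_vec \<times> sparse_vec) list \<Rightarrow> bool" where
  "bipartite_certificate G B W C \<longleftrightarrow> set B \<inter> set W = {}
     \<and> (\<forall>a\<in>set B. \<forall>b\<in>set B. \<not> G a b) \<and> (\<forall>a\<in>set W. \<forall>b\<in>set W. \<not> G a b)
     \<and> (\<forall>(L, R)\<in>set C. fst ` set L \<subseteq> set B \<and> fst ` set R \<subseteq> set W)
     \<and> (\<forall>a\<in>set B. \<forall>b\<in>set W. (if G a b then 1 else 0) = (\<Sum>(L, R)\<leftarrow>C. coord L a * coord R b))"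

lemma bipartite_certificate_indicator:
  assumes sym: "\<And>a b. G a b \<longleftrightarrow> G b a" and cert: "bipartite_certificate G B W C"
    and a: "a \<in> set B \<union> set W" and b: "b \<in> set B \<union> set W"
  shows "(if G a b then 1 else 0) = (\<Sum>(L, R)\<leftarrow>C. coord L a * coord R b + coord R a * coord L b)"
proof -
  define F where "F x y = (\<Sum>(L, R)\<leftarrow>C. coord L x * coord R y)" for x y
  have keys: "fst ` set L \<subseteq> set B \<and> fst ` set R \<subseteq> set W" if "(L, R) \<in> set C" for L R
  proof -
    have "\<forall>(L, R)\<in>set C. fst ` set L \<subseteq> set B \<and> fst ` set R \<subseteq> set W"
      using cert by (simp add: bipartite_certificate_def)
    then show ?thesis using that by blast
  qed
  have vanish: "F x y = 0" if xy: "x \<notin> set B \<or> y \<notin> set W" for x y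
  proof -
    have "coord L x * coord R y = 0" if "(L, R) \<in> set C" for L R
      using xy keys[OF that] coord_notin[of x L] coord_notin[of y R] by auto
    then have zero: "map (\<lambda>(L, R). coord L x * coord R y) C = map (\<lambda>_. 0) C"
      by (intro map_cong) auto
    show ?thesis unfolding F_def zero by (rule sum_list_0)
  qed
  have disj: "set B \<inter> set W = {}" and noB: "\<forall>a\<in>set B. \<forall>b\<in>set B. \<not> G a b"
    and noW: "\<forall>a\<in>set W. \<forall>b\<in>set W. \<not> G a b"
    and BW: "\<forall>a\<in>set B. \<forall>b\<in>set W. (if G a b then 1 else 0) = F a b"
    using cert by (simp_all add: bipartite_certificate_def F_def)
  have "(if G a b then 1 else 0) = F a b + F b a"
  proof (cases "a \<in> set B")
    case True
    then have "a \<notin> set W" using disj by blast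
    show ?thesis
    proof (cases "b \<in> set W")
      case True
      then show ?thesis using BW \<open>a \<in> set B\<close> vanish[of b a] disj by auto
    next
      case False
      then show ?thesis using noB \<open>a \<in> set B\<close> b vanish[of a b] vanish[of b a] \<open>a \<notin> set W\<close> by auto
    qed
  next
    case False
    then have "a \<in> set W" using a by blast
    show ?thesis
    proof (cases "b \<in> set B")
      case True
      then show ?thesis using BW \<open>a \<in> set W\<close> vanish[of a b] sym[of a b] disj by auto
    next
      case False
      then show ?thesis using noW \<open>a \<in> set W\<close> b vanish[of a b] vanish[of b a] \<open>a \<notin> set B\<close> by auto
    qed
  qed
  also have "F a b + F b a = (\<Sum>(L, R)\<leftarrow>C. coord L a * coord R b + coord R a * coord L b)"
    unfolding F_def by (induction C) (auto simp: algebra_simps)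
  finally show ?thesis .
qed

definition certificate_cost :: "nat \<Rightarrow> nat list \<Rightarrow> (sparse_vec \<times> sparse_vec) list \<Rightarrow> rat" where
  "certificate_cost h pb C = (\<Sum>(L, R)\<leftarrow>C. \<Sum>i\<leftarrow>[0..<length pb].
     (coord L (vertex_type h pb i))\<^sup>2 + (coord R (vertex_type h pb i))\<^sup>2)"

lemma energy_chain_tree_less:
  assumes hub: "hub_parent_list h pb"
    and cert: "bipartite_certificate (parent_graph (2 * h) (type_parent h pb)) B W C"
    and types: "vertex_type h pb ` {..<length pb} \<subseteq> set B \<union> set W"
    and cost: "certificate_cost h pb C < of_nat (length pb) - 1"
  shows "energy (length pb + 4 * k) (parent_graph (length pb + 4 * k) (chain_parent (length pb) (nth pb)))
    < real (length pb + 4 * k) - 1"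
proof -
  define N where "N = length pb"
  define n where "n = N + 4 * k"
  define x where "x t i = real_of_rat (coord (fst (C ! t)) (vertex_type h pb i))" for t i
  define y where "y t i = real_of_rat (coord (snd (C ! t)) (vertex_type h pb i))" for t i
  have base_less: "\<And>v. 0 < v \<Longrightarrow> v < N \<Longrightarrow> pb ! v < v"
    using hub by (auto simp: hub_parent_list_def N_def)
  have N: "0 < N" using hub unfolding hub_parent_list_def N_def by linarith
  have base: "(if parent_graph N (nth pb) i j then 1 else 0) = (\<Sum>t<length C. x t i * y t j + y t i * x t j)"
    if "i < N" "j < N" for i j
  proof -
    have "(if parent_graph N (nth pb) i j then 1 else 0 :: rat)
        = (\<Sum>(L, R)\<leftarrow>C. coord L (vertex_type h pb i) * coord R (vertex_type h pb j)
            + coord R (vertex_type h pb i) * coord L (vertex_type h pb j))"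
      unfolding N_def parent_graph_vertex_type[OF hub that[unfolded N_def]]
      by (rule bipartite_certificate_indicator[OF parent_graph_sym cert])
        (use types that in \<open>auto simp: N_def\<close>)
    then have "real_of_rat (if parent_graph N (nth pb) i j then 1 else 0)
        = real_of_rat (\<Sum>(L, R)\<leftarrow>C. coord L (vertex_type h pb i) * coord R (vertex_type h pb j)
            + coord R (vertex_type h pb i) * coord L (vertex_type h pb j))"
      by (rule arg_cong)
    then have "(if parent_graph N (nth pb) i j then 1 else 0)
        = real_of_rat (\<Sum>(L, R)\<leftarrow>C. coord L (vertex_type h pb i) * coord R (vertex_type h pb j)
            + coord R (vertex_type h pb i) * coord L (vertex_type h pb j))"
      by (simp only: if_distrib[of real_of_rat] of_rat_1 of_rat_0)
    also have "\<dots> = (\<Sum>t<length C. x t i * y t j + y t i * x t j)"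
      by (simp add: x_def y_def sum_list_sum_nth atLeast0LessThan case_prod_beta of_rat_sum
          of_rat_add of_rat_mult)
    finally show ?thesis .
  qed
  have "energy n (parent_graph n (chain_parent N (nth pb)))
      \<le> (\<Sum>t<length C. (\<Sum>i<N. (x t i)\<^sup>2) + (\<Sum>i<N. (y t i)\<^sup>2)) + 4 * k"
    unfolding n_def by (rule energy_chain_tree_le[OF base_less N finite_lessThan base])
  also have "(\<Sum>t<length C. (\<Sum>i<N. (x t i)\<^sup>2) + (\<Sum>i<N. (y t i)\<^sup>2)) = real_of_rat (certificate_cost h pb C)"
  proof -
    have map_sum: "sum_list (map f xs) = (\<Sum>t<length xs. f (xs ! t))" for f :: "_ \<Rightarrow> rat" and xs
      by (simp add: sum_list_sum_nth atLeast0LessThan)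
    have "certificate_cost h pb C = (\<Sum>t<length C. \<Sum>i<N.
        (coord (fst (C ! t)) (vertex_type h pb i))\<^sup>2 + (coord (snd (C ! t)) (vertex_type h pb i))\<^sup>2)"
      unfolding certificate_cost_def map_sum N_def by (simp add: case_prod_beta)
    then show ?thesis
      by (simp add: x_def y_def of_rat_sum of_rat_add of_rat_power sum.distrib)
  qed
  also have "real_of_rat (certificate_cost h pb C) + 4 * k < real n - 1"
  proof -
    have "real_of_rat (certificate_cost h pb C) < real_of_rat (of_nat N - 1)"
      using cost unfolding N_def of_rat_less .
    then show ?thesis by (simp add: n_def of_rat_diff)
  qed
  finally show ?thesis unfolding n_def N_def .
qed

definition child_count :: "nat list \<Rightarrow> nat \<Rightarrow> nat" where
  "child_count pb v = length (filter (\<lambda>u. pb ! u = v) [1..<length pb])"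

lemma card_children_eq_child_count: "card {u. 0 < u \<and> u < length pb \<and> pb ! u = v} = child_count pb v"
proof -
  have "{u. 0 < u \<and> u < length pb \<and> pb ! u = v} = set (filter (\<lambda>u. pb ! u = v) [1..<length pb])"
    by auto
  then show ?thesis
    unfolding child_count_def by (metis distinct_card distinct_filter distinct_upt)
qed

theorem strongly_hypoenergetic_star_chains:
  assumes hub: "hub_parent_list h pb"
    and root: "child_count pb 0 = 4" and deg: "\<forall>v\<in>{1..<length pb}. child_count pb v \<le> 3"
    and cert: "bipartite_certificate (parent_graph (2 * h) (type_parent h pb)) B W C"
    and types: "vertex_type h pb ` {..<length pb} \<subseteq> set B \<union> set W"
    and cost: "certificate_cost h pb C < of_nat (length pb) - 1"
  shows "\<exists>E. is_tree (length pb + 4 * k) E \<and> max_degree (length pb + 4 * k) E = 4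
    \<and> strongly_hypoenergetic (length pb + 4 * k) E"
proof (intro exI conjI)
  let ?n = "length pb + 4 * k" and ?p = "chain_parent (length pb) (nth pb)"
  have hub': "\<And>v. 0 < v \<Longrightarrow> v < length pb \<Longrightarrow> pb ! v < min v h" "h < length pb"
    using hub by (auto simp: hub_parent_list_def)
  then have parent_less: "\<And>v. 0 < v \<Longrightarrow> v < ?n \<Longrightarrow> ?p v < v"
    using chain_parent_less by fastforce
  show "is_tree ?n (parent_graph ?n ?p)"
    by (rule is_tree_parent_graph[OF parent_less])
  show "max_degree ?n (parent_graph ?n ?p) = 4"
    using hub' root deg by (intro max_degree_chain_tree) (auto simp: card_children_eq_child_count)
  show "strongly_hypoenergetic ?n (parent_graph ?n ?p)"
    unfolding strongly_hypoenergetic_def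
    using simple_graph_parent_graph[OF parent_less] graph_connected_parent_graph[OF parent_less]
      energy_chain_tree_less[OF hub cert types cost] by blast
qed

definition base_tree20 :: "nat list" where "base_tree20 = [0,0,0,0,0,1,1,1,2,2,2,3,3,3,4,4,4,5,5,5]"
definition black_types20 :: "nat list" where "black_types20 = [0,5,7,8,9,10]"
definition white_types20 :: "nat list" where "white_types20 = [1,2,3,4,11]"
definition cert20 :: "(sparse_vec \<times> sparse_vec) list" where "cert20 = [([(0, 11841/10000), (5, 5813/10000), (7, 212/625), (8, 176/625), (9, 176/625), (10, 176/625)],
    [(1, 1821/2000), (2, 189/250), (3, 189/250), (4, 189/250), (11, 1083/5000)]),
   ([(8, 1487/2500), (9, -4501/10000), (10, -1447/10000)],
    [(2, 5151/5000), (3, -7797/10000), (4, -1253/5000)]),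
   ([(0, 2987/10000), (5, -5727/5000), (7, -3581/10000), (8, 2189/10000), (9, 2189/10000), (10, 2189/10000)],
    [(1, -7481/10000), (2, 2287/5000), (3, 2287/5000), (4, 2287/5000), (11, -5483/10000)]),
   ([(8, -441/2500), (9, -4269/10000), (10, 6033/10000)],
    [(2, -611/2000), (3, -1479/2000), (4, 10449/10000)]),
   ([(0, -1021/5000), (5, 2713/5000), (7, -1487/2500), (8, 651/5000), (9, 651/5000), (10, 651/5000)],
    [(1, -1779/2500), (2, 1557/10000), (3, 1557/10000), (4, 1557/10000), (11, 567/1250)]),
   ([(0, 23/2000)],
    [(1, 257/115000), (2, -3/3125), (3, -3/3125), (4, -3/3125), (11, -7373/1150000)]),
   ([(5, 111/10000)],
    [(1, -3323/1110000), (2, -661/185000), (3, -661/185000), (4, -661/185000), (11, -697/138750)]),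
   ([(7, 4/625)],
    [(1, 411/640000), (2, -299/64000), (3, -299/64000), (4, -299/64000), (11, -1567/640000)]),
   ([(8, 17/2000)],
    [(1, 1261/850000), (2, 753/106250), (3, 779/212500), (4, 1133/106250), (11, -3041/850000)]),
   ([(9, 3/400)],
    [(1, 1261/750000), (2, -1153/750000), (3, 649/62500), (4, -277/150000), (11, -3041/750000)]),
   ([(10, 43/5000)],
    [(1, 1261/860000), (2, 9149/860000), (3, 779/215000), (4, 6341/860000), (11, -3041/860000)])]"

lemma base_tree20_certified:
  "hub_parent_list 6 base_tree20"
  "child_count base_tree20 0 = 4"
  "\<forall>v\<in>{1..<length base_tree20}. child_count base_tree20 v \<le> 3"
  "bipartite_certificate (parent_graph (2 * 6) (type_parent 6 base_tree20)) black_types20 white_types20 cert20"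
  "vertex_type 6 base_tree20 ` {..<length base_tree20} \<subseteq> set black_types20 \<union> set white_types20"
  "certificate_cost 6 base_tree20 cert20 < of_nat (length base_tree20) - 1"
  subgoal unfolding hub_parent_list_def atLeastLessThan_upt Ball_set by (simp add: base_tree20_def upt_rec)
  subgoal by (simp add: child_count_def base_tree20_def)
  subgoal unfolding atLeastLessThan_upt Ball_set by (simp add: child_count_def base_tree20_def upt_rec)
  subgoal by (simp add: bipartite_certificate_def parent_graph_def type_parent_def coord_def
      base_tree20_def black_types20_def white_types20_def cert20_def)
  subgoal unfolding lessThan_atLeast0 atLeastLessThan_upt
    by (simp add: vertex_type_def base_tree20_def black_types20_def white_types20_def upt_rec del: set_upt)
  subgoal by (simp add: certificate_cost_def coord_def vertex_type_def base_tree20_def cert20_def upt_rec power2_eq_square)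
  done

definition base_tree23 :: "nat list" where "base_tree23 = [0,0,0,0,0,1,1,1,2,2,2,3,3,3,4,4,4,5,5,5,6,6,6]"
definition black_types23 :: "nat list" where "black_types23 = [0,5,6,8,9,10,11]"
definition white_types23 :: "nat list" where "white_types23 = [1,2,3,4,12,13]"
definition cert23 :: "(sparse_vec \<times> sparse_vec) list" where "cert23 = [([(0, 5629/5000), (5, 3057/5000), (6, 3057/5000), (8, 228/625), (9, 2537/10000), (10, 2537/10000), (11, 2537/10000)],
    [(1, 9949/10000), (2, 3459/5000), (3, 3459/5000), (4, 3459/5000), (12, 1121/5000), (13, 1121/5000)]),
   ([(5, 2023/2500), (6, -2023/2500), (9, 3013/10000), (10, -993/5000), (11, -1027/10000)],
    [(2, 5219/10000), (3, -3441/10000), (4, -889/5000), (12, 292/625), (13, -292/625)]),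
   ([(0, 4599/10000), (5, -101/125), (6, -101/125), (8, -3037/10000), (9, 509/2000), (10, 509/2000), (11, 509/2000)],
    [(1, -6659/10000), (2, 279/500), (3, 279/500), (4, 279/500), (12, -737/2000), (13, -737/2000)]),
   ([(5, 237/10000), (6, -237/10000), (9, -697/5000), (10, -4537/10000), (11, 5931/10000)],
    [(2, -483/2000), (3, -3929/5000), (4, 642/625), (12, 137/10000), (13, -137/10000)]),
   ([(0, -757/2500), (5, 119/500), (6, 119/500), (8, -3537/5000), (9, 1349/10000), (10, 1349/10000), (11, 1349/10000)],
    [(1, -6147/10000), (2, 293/2500), (3, 293/2500), (4, 293/2500), (12, 1369/5000), (13, 1369/5000)]),
   ([(5, -4589/10000), (6, 4589/10000), (9, 5241/10000), (10, -3737/10000), (11, -94/625)],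
    [(2, 4539/5000), (3, -809/1250), (4, -521/2000), (12, -53/200), (13, 53/200)]),
   ([(0, 51/5000)],
    [(1, 5783/1020000), (2, 37/10625), (3, 37/10625), (4, 37/10625), (12, -819/340000), (13, -819/340000)]),
   ([(5, 93/10000)],
    [(1, -1523/465000), (2, -463/930000), (3, 3649/465000), (4, -169/186000), (12, 2029/930000), (13, 21/62000)]),
   ([(6, 91/10000)],
    [(1, -1523/455000), (2, 177/130000), (3, -3261/455000), (4, 1621/910000), (12, 9/26000), (13, 2029/910000)]),
   ([(8, 63/10000)],
    [(1, -1213/630000), (2, 9/17500), (3, 9/17500), (4, 9/17500), (12, -1549/630000), (13, -1549/630000)]),
   ([(9, 41/5000)],
    [(1, -231/164000), (2, -2249/820000), (3, 339/820000), (4, -4007/820000), (12, -299/820000), (13, -6083/820000)]),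
   ([(10, 17/2000)],
    [(1, -231/170000), (2, -529/850000), (3, -453/85000), (4, 4977/850000), (12, -76/10625), (13, -151/425000)]),
   ([(11, 19/2500)],
    [(1, -231/152000), (2, 23/5000), (3, 4909/760000), (4, -63/190000), (12, -1597/380000), (13, -797/190000)])]"

lemma base_tree23_certified:
  "hub_parent_list 7 base_tree23"
  "child_count base_tree23 0 = 4"
  "\<forall>v\<in>{1..<length base_tree23}. child_count base_tree23 v \<le> 3"
  "bipartite_certificate (parent_graph (2 * 7) (type_parent 7 base_tree23)) black_types23 white_types23 cert23"
  "vertex_type 7 base_tree23 ` {..<length base_tree23} \<subseteq> set black_types23 \<union> set white_types23"
  "certificate_cost 7 base_tree23 cert23 < of_nat (length base_tree23) - 1"
  subgoal unfolding hub_parent_list_def atLeastLessThan_upt Ball_set by (simp add: base_tree23_def upt_rec)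
  subgoal by (simp add: child_count_def base_tree23_def)
  subgoal unfolding atLeastLessThan_upt Ball_set by (simp add: child_count_def base_tree23_def upt_rec)
  subgoal by (simp add: bipartite_certificate_def parent_graph_def type_parent_def coord_def
      base_tree23_def black_types23_def white_types23_def cert23_def)
  subgoal unfolding lessThan_atLeast0 atLeastLessThan_upt
    by (simp add: vertex_type_def base_tree23_def black_types23_def white_types23_def upt_rec del: set_upt)
  subgoal by (simp add: certificate_cost_def coord_def vertex_type_def base_tree23_def cert23_def upt_rec power2_eq_square)
  done

definition base_tree26 :: "nat list" where "base_tree26 = [0,0,0,0,0,4,4,4,1,1,1,2,2,2,3,3,3,5,5,5,6,6,6,7,7,7]"
definition black_types26 :: "nat list" where "black_types26 = [0,5,6,7,9,10,11]"
definition white_types26 :: "nat list" where "white_types26 = [1,2,3,4,13,14,15]"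
definition cert26 :: "(sparse_vec \<times> sparse_vec) list" where "cert26 = [([(9, 5373/10000), (10, -5373/10000)],
    [(1, 4653/5000), (2, -4653/5000)]),
   ([(0, 664/625), (5, 157/250), (6, 157/250), (7, 157/250), (9, 283/1250), (10, 283/1250), (11, 283/1250)],
    [(1, 157/250), (2, 157/250), (3, 157/250), (4, 664/625), (13, 283/1250), (14, 283/1250), (15, 283/1250)]),
   ([(0, 2919/5000), (5, -6331/10000), (6, -6331/10000), (7, -6331/10000), (9, 2809/10000), (10, 2809/10000), (11, 2809/10000)],
    [(1, 6331/10000), (2, 6331/10000), (3, 6331/10000), (4, -2919/5000), (13, -2809/10000), (14, -2809/10000), (15, -2809/10000)]),
   ([(5, -601/1000), (6, -151/1000), (7, 94/125), (9, -417/2000), (10, -417/2000), (11, 417/1000)],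
    [(1, -3611/10000), (2, -3611/10000), (3, 7223/10000), (13, -347/1000), (14, -109/1250), (15, 2171/5000)]),
   ([(0, -921/2000), (5, 399/5000), (6, 399/5000), (7, 399/5000), (9, 1663/10000), (10, 1663/10000), (11, 1663/10000)],
    [(1, 399/5000), (2, 399/5000), (3, 399/5000), (4, -921/2000), (13, 1663/10000), (14, 1663/10000), (15, 1663/10000)]),
   ([(5, -2843/5000), (6, 2649/2500), (7, -491/1000), (9, -499/10000), (10, -499/10000), (11, 999/10000)],
    [(1, -173/2000), (2, -173/2000), (3, 173/1000), (13, -3283/10000), (14, 3059/5000), (15, -567/2000)]),
   ([(5, -6857/10000), (6, 239/2500), (7, 59/100), (9, 1121/5000), (10, 1121/5000), (11, -1121/2500)],
    [(1, 3883/10000), (2, 3883/10000), (3, -3883/5000), (13, -3959/10000), (14, 69/1250), (15, 3407/10000)]),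
   ([(0, 8/625)],
    [(1, -1077/320000), (2, -1077/320000), (3, -1077/320000), (4, 6843/1280000), (13, 4321/1280000), (14, 4321/1280000), (15, 4321/1280000)]),
   ([(5, 153/10000)],
    [(1, 2897/382500), (2, 2897/382500), (3, 127/102000), (4, -359/127500), (13, 421/255000), (14, 2519/1530000), (15, 127/22500)]),
   ([(6, 3/200)],
    [(1, 7139/1500000), (2, 7139/1500000), (3, 2101/500000), (4, -359/125000), (13, 2999/1500000), (14, 467/1500000), (15, 681/100000)]),
   ([(7, 3/200)],
    [(1, 1409/500000), (2, 1409/500000), (3, 3097/1500000), (4, -359/125000), (13, 1399/500000), (14, 3749/500000), (15, -1763/1500000)]),
   ([(9, 17/2000)],
    [(1, 3833/850000), (2, 6109/850000), (3, 364/53125), (4, 4321/850000), (13, 2127/850000), (14, -1803/425000), (15, -873/850000)]),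
   ([(10, 17/2000)],
    [(1, 6109/850000), (2, 3833/850000), (3, 364/53125), (4, 4321/850000), (13, 2127/850000), (14, -1803/425000), (15, -873/850000)]),
   ([(11, 79/10000)],
    [(1, 1151/197500), (2, 1151/197500), (3, 303/790000), (4, 4321/790000), (13, -3323/790000), (14, -629/395000), (15, 2229/790000)])]"

lemma base_tree26_certified:
  "hub_parent_list 8 base_tree26"
  "child_count base_tree26 0 = 4"
  "\<forall>v\<in>{1..<length base_tree26}. child_count base_tree26 v \<le> 3"
  "bipartite_certificate (parent_graph (2 * 8) (type_parent 8 base_tree26)) black_types26 white_types26 cert26"
  "vertex_type 8 base_tree26 ` {..<length base_tree26} \<subseteq> set black_types26 \<union> set white_types26"
  "certificate_cost 8 base_tree26 cert26 < of_nat (length base_tree26) - 1"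
  subgoal unfolding hub_parent_list_def atLeastLessThan_upt Ball_set by (simp add: base_tree26_def upt_rec)
  subgoal by (simp add: child_count_def base_tree26_def)
  subgoal unfolding atLeastLessThan_upt Ball_set by (simp add: child_count_def base_tree26_def upt_rec)
  subgoal by (simp add: bipartite_certificate_def parent_graph_def type_parent_def coord_def
      base_tree26_def black_types26_def white_types26_def cert26_def)
  subgoal unfolding lessThan_atLeast0 atLeastLessThan_upt
    by (simp add: vertex_type_def base_tree26_def black_types26_def white_types26_def upt_rec del: set_upt)
  subgoal by (simp add: certificate_cost_def coord_def vertex_type_def base_tree26_def cert26_def upt_rec power2_eq_square)
  done

lemma length_base_trees:
  "length base_tree20 = 20" "length base_tree23 = 23" "length base_tree26 = 26"
  by (simp_all add: base_tree20_def base_tree23_def base_tree26_def)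

theorem lemma2p4:
  fixes n :: nat
  assumes "(n mod 4 = 0 \<and> n \<ge> 20) \<or> (n mod 4 = 2 \<and> n \<ge> 26) \<or> (n mod 4 = 3 \<and> n \<ge> 23)"
  shows "\<exists>E. is_tree n E \<and> max_degree n E = 4 \<and> strongly_hypoenergetic n E"
proof -
  have "\<exists>k. n = 20 + 4 * k \<or> n = 23 + 4 * k \<or> n = 26 + 4 * k" using assms by presburger
  then obtain k where "n = 20 + 4 * k \<or> n = 23 + 4 * k \<or> n = 26 + 4 * k" by blast
  then show ?thesis
    using strongly_hypoenergetic_star_chains[OF base_tree20_certified, of k]
      strongly_hypoenergetic_star_chains[OF base_tree23_certified, of k]
      strongly_hypoenergetic_star_chains[OF base_tree26_certified, of k]
    unfolding length_base_trees by blast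
qed

end
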